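(* Let $(\mathfrak{g},[\cdot,\cdot]_{\mathfrak{g}})$ be a Leibniz algebra over a field $\mathbf{K}$, $(V;\rho^L,\rho^R)$ a representation, $T:V\to\mathfrak{g}$ a relative Rota-Baxter operator, and $T_t=\sum_{i=0}^n\mathfrak{T}_it^i$ an order $n$ deformation of $T$. Define $\mathrm{Ob}_T\in C^2(V,\mathfrak{g})$ by $\mathrm{Ob}_T(u,v)=\sum_{i+j=n+1,\ i,j\ge1}\big([\mathfrak{T}_iu,\mathfrak{T}_jv]_{\mathfrak{g}}-\mathfrak{T}_i(\rho^L(\mathfrak{T}_ju)v+\rho^R(\mathfrak{T}_jv)u)\big)$. Then $\partial_T\mathrm{Ob}_T=0$, i.e. $\mathrm{Ob}_T$ is a 2-cocycle.
   Context: A Leibniz algebra is a vector space $\mathfrak{g}$ with bilinear $[\cdot,\cdot]_{\mathfrak{g}}$ satisfying $[x,[y,z]_{\mathfrak{g}}]_{\mathfrak{g}}=[[x,y]_{\mathfrak{g}},z]_{\mathfrak{g}}+[y,[x,z]_{\mathfrak{g}}]_{\mathfrak{g}}$. A representation $(V;\rho^L,\rho^R)$: linear $\rho^L,\rho^R:\mathfrak{g}\to\mathfrak{gl}(V)$ with $\rho^L([x,y]_{\mathfrak{g}})=[\rho^L(x),\rho^L(y)]$, $\rho^R([x,y]_{\mathfrak{g}})=[\rho^L(x),\rho^R(y)]$, $\rho^R(y)\rho^L(x)=-\rho^R(y)\rho^R(x)$. A relative Rota-Baxter operator is a linear $T:V\to\mathfrak{g}$ with $[Tv_1,Tv_2]_{\mathfrak{g}}=T(\rho^L(Tv_1)v_2+\rho^R(Tv_2)v_1)$.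 $C^k(V,\mathfrak{g})=\mathrm{Hom}(\otimes^kV,\mathfrak{g})$ and $\partial_T:C^k\to C^{k+1}$ is $(\partial_Tf)(v_1,\dots,v_{k+1})=\sum_{i=1}^k(-1)^{i+1}[Tv_i,f(v_1,\dots,\hat v_i,\dots,v_{k+1})]_{\mathfrak{g}}-\sum_{i=1}^k(-1)^{i+1}T\rho^R(f(v_1,\dots,\hat v_i,\dots,v_{k+1}))v_i+(-1)^{k+1}[f(v_1,\dots,v_k),Tv_{k+1}]_{\mathfrak{g}}+(-1)^kT\rho^L(f(v_1,\dots,v_k))v_{k+1}+\sum_{1\le i<j\le k+1}(-1)^if(v_1,\dots,\hat v_i,\dots,v_{j-1},\rho^L(Tv_i)v_j+\rho^R(Tv_j)v_i,v_{j+1},\dots,v_{k+1})$. An order $n$ deformation of $T$ is $T_t=\sum_{i=0}^n\mathfrak{T}_it^i$ with $\mathfrak{T}_0=T$, $\mathfrak{T}_i\in\mathrm{Hom}(V,\mathfrak{g})$, viewed as a $\mathbf{K}[t]/(t^{n+1})$-module map $V[t]/(t^{n+1})\to\mathfrak{g}[t]/(t^{n+1})$ (bracket and $\rho^L,\rho^R$ extended $\mathbf{K}[t]/(t^{n+1})$-bilinearly), such that $[T_t(u),T_t(v)]_{\mathfrak{g}}=T_t(\rho^L(T_t(u))v+\rho^R(T_t(v))u)$ for all $u,v\in V$; equivalently $\sum_{k+l=i,\,k,l\ge0}\big([\mathfrak{T}_ku,\mathfrak{T}_lv]_{\mathfrak{g}}-\mathfrak{T}_k(\rho^L(\mathfrak{T}_lu)v+\rho^R(\mathfrak{T}_lv)u)\big)=0$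 for $0\le i\le n$. *)

theory Defs
  imports Complex_Main
begin

definition leibniz_algebra ::
  "('k::field \<Rightarrow> 'g::ab_group_add \<Rightarrow> 'g) \<Rightarrow> ('g \<Rightarrow> 'g \<Rightarrow> 'g) \<Rightarrow> bool" where
  "leibniz_algebra sG br \<longleftrightarrow>
     vector_space sG \<and>
     (\<forall>x. Vector_Spaces.linear sG sG (br x)) \<and>
     (\<forall>y. Vector_Spaces.linear sG sG (\<lambda>x. br x y)) \<and>
     (\<forall>x y z. br x (br y z) = br (br x y) z + br y (br x z))"

definition leibniz_rep ::
  "('k::field \<Rightarrow> 'g::ab_group_add \<Rightarrow> 'g) \<Rightarrow> ('g \<Rightarrow> 'g \<Rightarrow> 'g) \<Rightarrow>
   ('k \<Rightarrow> 'v::ab_group_add \<Rightarrow> 'v) \<Rightarrow> ('g \<Rightarrow> 'v \<Rightarrow> 'v) \<Rightarrow> ('g \<Rightarrow> 'v \<Rightarrow> 'v) \<Rightarrow> bool" where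
  "leibniz_rep sG br sV rhoL rhoR \<longleftrightarrow>
     vector_space sV \<and>
     (\<forall>x. Vector_Spaces.linear sV sV (rhoL x)) \<and>
     (\<forall>x. Vector_Spaces.linear sV sV (rhoR x)) \<and>
     (\<forall>v. Vector_Spaces.linear sG sV (\<lambda>x. rhoL x v)) \<and>
     (\<forall>v. Vector_Spaces.linear sG sV (\<lambda>x. rhoR x v)) \<and>
     (\<forall>x y v. rhoL (br x y) v = rhoL x (rhoL y v) - rhoL y (rhoL x v)) \<and>
     (\<forall>x y v. rhoR (br x y) v = rhoL x (rhoR y v) - rhoR y (rhoL x v)) \<and>
     (\<forall>x y v. rhoR y (rhoL x v) = - rhoR y (rhoR x v))"

definition relative_RB ::
  "('k::field \<Rightarrow> 'g::ab_group_add \<Rightarrow> 'g) \<Rightarrow> ('g \<Rightarrow> 'g \<Rightarrow> 'g) \<Rightarrow>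
   ('k \<Rightarrow> 'v::ab_group_add \<Rightarrow> 'v) \<Rightarrow> ('g \<Rightarrow> 'v \<Rightarrow> 'v) \<Rightarrow> ('g \<Rightarrow> 'v \<Rightarrow> 'v) \<Rightarrow>
   ('v \<Rightarrow> 'g) \<Rightarrow> bool" where
  "relative_RB sG br sV rhoL rhoR T \<longleftrightarrow>
     Vector_Spaces.linear sV sG T \<and>
     (\<forall>v1 v2. br (T v1) (T v2) = T (rhoL (T v1) v2 + rhoR (T v2) v1))"

text \<open>Order n deformation T_t = sum_{i=0}^n TT i t^i of T, via the equivalent
  coefficientwise equations given in the paper.\<close>
definition order_n_deformation ::
  "('k::field \<Rightarrow> 'g::ab_group_add \<Rightarrow> 'g) \<Rightarrow> ('g \<Rightarrow> 'g \<Rightarrow> 'g) \<Rightarrow>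
   ('k \<Rightarrow> 'v::ab_group_add \<Rightarrow> 'v) \<Rightarrow> ('g \<Rightarrow> 'v \<Rightarrow> 'v) \<Rightarrow> ('g \<Rightarrow> 'v \<Rightarrow> 'v) \<Rightarrow>
   ('v \<Rightarrow> 'g) \<Rightarrow> nat \<Rightarrow> (nat \<Rightarrow> 'v \<Rightarrow> 'g) \<Rightarrow> bool" where
  "order_n_deformation sG br sV rhoL rhoR T n TT \<longleftrightarrow>
     TT 0 = T \<and>
     (\<forall>i\<le>n. Vector_Spaces.linear sV sG (TT i)) \<and>
     (\<forall>i\<le>n. \<forall>u v. (\<Sum>k=0..i. br (TT k u) (TT (i - k) v)
                   - TT k (rhoL (TT (i - k) u) v + rhoR (TT (i - k) v) u)) = 0)"

definition obstruction ::
  "('g::ab_group_add \<Rightarrow> 'g \<Rightarrow> 'g) \<Rightarrow> ('g \<Rightarrow> 'v \<Rightarrow> 'v) \<Rightarrow> ('g \<Rightarrow> 'v \<Rightarrow> 'v) \<Rightarrow>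
   nat \<Rightarrow> (nat \<Rightarrow> 'v::ab_group_add \<Rightarrow> 'g) \<Rightarrow> 'v \<Rightarrow> 'v \<Rightarrow> 'g" where
  "obstruction br rhoL rhoR n TT u v =
     (\<Sum>i=1..n. br (TT i u) (TT (n + 1 - i) v)
        - TT i (rhoL (TT (n + 1 - i) u) v + rhoR (TT (n + 1 - i) v) u))"

text \<open>k-cochains: functions of a list of k vectors (the list [v_1,...,v_k]).
  Coboundary d_T f evaluated on a list vs = [v_1,...,v_{k+1}] (1-based v_i = vs ! (i-1)).\<close>
definition coboundary ::
  "('k::field \<Rightarrow> 'g::ab_group_add \<Rightarrow> 'g) \<Rightarrow> ('g \<Rightarrow> 'g \<Rightarrow> 'g) \<Rightarrow>
   ('g \<Rightarrow> 'v::ab_group_add \<Rightarrow> 'v) \<Rightarrow> ('g \<Rightarrow> 'v \<Rightarrow> 'v) \<Rightarrow> ('v \<Rightarrow> 'g) \<Rightarrow>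
   nat \<Rightarrow> ('v list \<Rightarrow> 'g) \<Rightarrow> 'v list \<Rightarrow> 'g" where
  "coboundary sG br rhoL rhoR T k f vs =
     (let v = (\<lambda>i. vs ! (i - 1));
          del = (\<lambda>i ws. take (i - 1) ws @ drop i ws)
      in (\<Sum>i=1..k. sG ((-1) ^ (i + 1)) (br (T (v i)) (f (del i vs))))
       - (\<Sum>i=1..k. sG ((-1) ^ (i + 1)) (T (rhoR (f (del i vs)) (v i))))
       + sG ((-1) ^ (k + 1)) (br (f (take k vs)) (T (v (k + 1))))
       + sG ((-1) ^ k) (T (rhoL (f (take k vs)) (v (k + 1))))
       + (\<Sum>j=1..k+1. \<Sum>i=1..<j. sG ((-1) ^ i)
            (f (del i (vs[j - 1 := rhoL (T (v i)) (v j) + rhoR (T (v j)) (v i)])))))"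

end

theory Submission
  imports Defs
begin

text \<open>Extend the deformation by \<open>X k = 0\<close> for \<open>k > n\<close> and let
  \<open>D(P, Q)(u, v) = [P u, Q v] - P (\<rho>\<^sup>L(Q u) v + \<rho>\<^sup>R(Q v) u)\<close> (\<open>rb_defect\<close>), with \<open>\<partial>\<^sub>P\<close> the
  coboundary of 2-cochains built from \<open>P\<close> in place of \<open>T\<close> (\<open>coboundary2\<close>). Then
  \<open>Ob\<^sub>T = \<Sum> D(X b, X (n + 1 - b))\<close>, so \<open>\<partial>\<^sub>T Ob\<^sub>T\<close> is the part with \<open>a = 0\<close> of the sum of
  \<open>\<partial>\<^sub>X \<^sub>a D(X b, X c)\<close> over \<open>a + b + c = n + 1\<close>. This triple sum vanishes for every family
  of additive maps \<open>X\<close>, being the graded Jacobi identity \<open>[[\<Theta>, \<Theta>], \<Theta>] = 0\<close> for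
  \<open>\<Theta> = \<Sum> X k t\<^sup>k\<close>: after permuting the summation indices its terms cancel by the Leibniz
  and representation identities. The parts with \<open>a \<ge> 1\<close> vanish separately, since they
  are \<open>\<partial>\<^sub>X \<^sub>a\<close> applied to the deformation equations of order \<open>n + 1 - a \<le> n\<close>.\<close>

lemma linear_add: "Vector_Spaces.linear s1 s2 f \<Longrightarrow> f (x + y) = f x + f y"
  by (metis module_hom.add linear_iff_module_hom)

lemma additiveD:
  fixes f :: "'a::ab_group_add \<Rightarrow> 'b::ab_group_add"
  assumes "\<And>x y. f (x + y) = f x + f y"
  shows "f (x - y) = f x - f y" "f (- x) = - f x" "f 0 = 0"
    "f (sum g A) = (\<Sum>i\<in>A. f (g i))"
proof -
  interpret additive f by unfold_locales (rule assms)
  show "f (x - y) = f x - f y" "f (- x) = - f x" "f 0 = 0" "f (sum g A) = (\<Sum>i\<in>A. f (g i))"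
    by (simp_all add: diff minus zero sum)
qed

definition triples_summing_to :: "nat \<Rightarrow> (nat \<times> nat \<times> nat) set" where
  "triples_summing_to m = {(a, b, c). a + b + c = m}"

lemma sum_triples_summing_to_nested:
  "(\<Sum>(a, b, c)\<in>triples_summing_to m. F a b c) = (\<Sum>a\<le>m. \<Sum>b\<le>m - a. F a b (m - a - b))"
proof -
  have "(\<Sum>a\<le>m. \<Sum>b\<le>m - a. F a b (m - a - b))
      = (\<Sum>(a, b)\<in>Sigma {..m} (\<lambda>a. {..m - a}). F a b (m - a - b))"
    by (rule sum.Sigma) auto
  also have "\<dots> = (\<Sum>(a, b, c)\<in>triples_summing_to m. F a b c)"
    by (rule sum.reindex_bij_witness[of _ "\<lambda>(a, b, c). (a, b)" "\<lambda>(a, b). (a, b, m - a - b)"])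
       (auto simp: triples_summing_to_def)
  finally show ?thesis by simp
qed

lemma sum_triples_summing_to_Suc:
  "(\<Sum>(a, b, c)\<in>triples_summing_to (Suc n). F a b c)
     = (\<Sum>b\<le>Suc n. F 0 b (Suc n - b)) + (\<Sum>i\<le>n. \<Sum>b\<le>n - i. F (Suc i) b (n - i - b))"
  unfolding sum_triples_summing_to_nested by (subst sum.atMost_Suc_shift) simp

lemma sum_triples_summing_to_swap12:
  "(\<Sum>(a, b, c)\<in>triples_summing_to m. F b a c) = (\<Sum>(a, b, c)\<in>triples_summing_to m. F a b c)"
  by (rule sum.reindex_bij_witness[of _ "\<lambda>(a, b, c). (b, a, c)" "\<lambda>(a, b, c). (b, a, c)"])
     (auto simp: triples_summing_to_def)

lemma sum_triples_summing_to_swap13: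
  "(\<Sum>(a, b, c)\<in>triples_summing_to m. F c b a) = (\<Sum>(a, b, c)\<in>triples_summing_to m. F a b c)"
  by (rule sum.reindex_bij_witness[of _ "\<lambda>(a, b, c). (c, b, a)" "\<lambda>(a, b, c). (c, b, a)"])
     (auto simp: triples_summing_to_def)

lemma sum_triples_summing_to_rotate:
  "(\<Sum>(a, b, c)\<in>triples_summing_to m. F c a b) = (\<Sum>(a, b, c)\<in>triples_summing_to m. F a b c)"
  by (rule sum.reindex_bij_witness[of _ "\<lambda>(a, b, c). (b, c, a)" "\<lambda>(a, b, c). (c, a, b)"])
     (auto simp: triples_summing_to_def)

locale additive_leibniz_rep =
  fixes br :: "'g::ab_group_add \<Rightarrow> 'g \<Rightarrow> 'g" and rL rR :: "'g \<Rightarrow> 'v::ab_group_add \<Rightarrow> 'v"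
  assumes br_add_left: "br (x + y) z = br x z + br y z"
    and br_add_right: "br x (y + z) = br x y + br x z"
    and rL_add_left: "rL (x + y) v = rL x v + rL y v"
    and rL_add_right: "rL x (v + w) = rL x v + rL x w"
    and rR_add_left: "rR (x + y) v = rR x v + rR y v"
    and rR_add_right: "rR x (v + w) = rR x v + rR x w"
    and leibniz: "br x (br y z) = br (br x y) z + br y (br x z)"
    and rL_br: "rL (br x y) v = rL x (rL y v) - rL y (rL x v)"
    and rR_br: "rR (br x y) v = rL x (rR y v) - rR y (rL x v)"
    and rR_rL: "rR y (rL x v) = - rR y (rR x v)"
begin

lemmas additive_simps =
  br_add_left br_add_right rL_add_left rL_add_right rR_add_left rR_add_right
  additiveD(1-3)[where f="\<lambda>x. br x z" for z, OF br_add_left]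
  additiveD(1-3)[where f="\<lambda>y. br x y" for x, OF br_add_right]
  additiveD(1-3)[where f="\<lambda>x. rL x v" for v, OF rL_add_left]
  additiveD(1-3)[where f="\<lambda>v. rL x v" for x, OF rL_add_right]
  additiveD(1-3)[where f="\<lambda>x. rR x v" for v, OF rR_add_left]
  additiveD(1-3)[where f="\<lambda>v. rR x v" for x, OF rR_add_right]

lemma leibniz_left: "br (br x y) z = br x (br y z) - br y (br x z)"
  using leibniz[of x y z] by (simp add: algebra_simps)

definition induced_bracket :: "('v \<Rightarrow> 'g) \<Rightarrow> 'v \<Rightarrow> 'v \<Rightarrow> 'v" where
  "induced_bracket P u v = rL (P u) v + rR (P v) u"

definition rb_defect :: "('v \<Rightarrow> 'g) \<Rightarrow> ('v \<Rightarrow> 'g) \<Rightarrow> 'v \<Rightarrow> 'v \<Rightarrow> 'g" where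
  "rb_defect P Q u v = br (P u) (Q v) - P (induced_bracket Q u v)"

definition coboundary2 :: "('v \<Rightarrow> 'g) \<Rightarrow> ('v \<Rightarrow> 'v \<Rightarrow> 'g) \<Rightarrow> 'v \<Rightarrow> 'v \<Rightarrow> 'v \<Rightarrow> 'g" where
  "coboundary2 P f v1 v2 v3 = br (P v1) (f v2 v3) - br (P v2) (f v1 v3) - P (rR (f v2 v3) v1)
     + P (rR (f v1 v3) v2) - br (f v1 v2) (P v3) + P (rL (f v1 v2) v3)
     - f (induced_bracket P v1 v2) v3 - f v2 (induced_bracket P v1 v3)
     + f v1 (induced_bracket P v2 v3)"

lemma coboundary2_zero:
  assumes "\<And>x y. P (x + y) = P x + P y"
  shows "coboundary2 P (\<lambda>u v. 0) v1 v2 v3 = 0"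
  unfolding coboundary2_def using additiveD[OF assms] by (simp add: additive_simps)

lemma coboundary2_add:
  assumes "\<And>x y. P (x + y) = P x + P y"
  shows "coboundary2 P (\<lambda>u v. f u v + g u v) v1 v2 v3 = coboundary2 P f v1 v2 v3 + coboundary2 P g v1 v2 v3"
  unfolding coboundary2_def using assms by (simp add: additive_simps algebra_simps)

lemma coboundary2_sum:
  assumes "\<And>x y. P (x + y) = P x + P y" and "finite A"
  shows "coboundary2 P (\<lambda>u v. \<Sum>i\<in>A. f i u v) v1 v2 v3 = (\<Sum>i\<in>A. coboundary2 P (f i) v1 v2 v3)"
  using assms(2)
proof (induction A rule: finite_induct)
  case empty
  then show ?case using coboundary2_zero[OF assms(1)] by simp
next
  case (insert i A)
  then show ?case using coboundary2_add[OF assms(1), of "f i" "\<lambda>u v. \<Sum>i\<in>A. f i u v"] by simp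
qed

context
  fixes X :: "nat \<Rightarrow> 'v \<Rightarrow> 'g" and v1 v2 v3 :: 'v
  assumes X_add: "\<And>k x y. X k (x + y) = X k x + X k y"
begin

lemmas X_simps = additiveD(1-3)[where f="X k" for k, OF X_add] X_add

text \<open>The terms of \<open>coboundary2 (X a) (rb_defect (X b) (X c)) v1 v2 v3\<close> are grouped only so
  that the groups, relabelled as in \<open>defect_parts_permuted_cancel\<close>, cancel.\<close>

definition defect_part0 :: "nat \<Rightarrow> nat \<Rightarrow> nat \<Rightarrow> 'g" where
  "defect_part0 a b c =
    br (X a v1) (br (X b v2) (X c v3))
    - br (X a v1) (X b (rL (X c v2) v3))
    - br (X a v1) (X b (rR (X c v3) v2))
    + br (X a v2) (X b (rL (X c v1) v3))
    + br (X a v2) (X b (rR (X c v3) v1))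
    - X a (rR (br (X b v2) (X c v3)) v1)
    + X a (rR (X b (rL (X c v2) v3)) v1)
    + X a (rR (X b (rR (X c v3) v2)) v1)
    + X a (rR (br (X b v1) (X c v3)) v2)
    - X a (rR (X b (rL (X c v1) v3)) v2)
    - X a (rR (X b (rR (X c v3) v1)) v2)
    + br (X b (rL (X c v1) v2)) (X a v3)
    + br (X b (rR (X c v2) v1)) (X a v3)
    + X a (rL (br (X b v1) (X c v2)) v3)
    - X a (rL (X b (rL (X c v1) v2)) v3)
    - X a (rL (X b (rR (X c v2) v1)) v3)"

definition defect_part1 :: "nat \<Rightarrow> nat \<Rightarrow> nat \<Rightarrow> 'g" where
  "defect_part1 a b c =
    - br (X a v2) (br (X b v1) (X c v3))
    + X b (rR (X c v3) (rL (X a v1) v2))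
    + X b (rR (X c v3) (rR (X a v2) v1))
    + X b (rL (X c v2) (rL (X a v1) v3))"

definition defect_part2 :: "nat \<Rightarrow> nat \<Rightarrow> nat \<Rightarrow> 'g" where
  "defect_part2 a b c =
    - br (X b (rL (X a v1) v2)) (X c v3)
    - br (X b (rR (X a v2) v1)) (X c v3)"

definition defect_part3 :: "nat \<Rightarrow> nat \<Rightarrow> nat \<Rightarrow> 'g" where
  "defect_part3 a b c =
    - br (br (X b v1) (X c v2)) (X a v3)
    + X b (rL (X c (rL (X a v1) v2)) v3)
    + X b (rL (X c (rR (X a v2) v1)) v3)
    - br (X b v2) (X c (rL (X a v1) v3))
    - br (X b v2) (X c (rR (X a v3) v1))
    + X b (rL (X c v2) (rR (X a v3) v1))
    + X b (rR (X c (rL (X a v1) v3)) v2)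
    + X b (rR (X c (rR (X a v3) v1)) v2)
    + br (X b v1) (X c (rL (X a v2) v3))
    + br (X b v1) (X c (rR (X a v3) v2))
    - X b (rL (X c v1) (rL (X a v2) v3))
    - X b (rL (X c v1) (rR (X a v3) v2))
    - X b (rR (X c (rL (X a v2) v3)) v1)
    - X b (rR (X c (rR (X a v3) v2)) v1)"

lemma coboundary2_rb_defect_split:
  "coboundary2 (X a) (rb_defect (X b) (X c)) v1 v2 v3
     = defect_part0 a b c + defect_part1 a b c + defect_part2 a b c + defect_part3 a b c"
  unfolding coboundary2_def rb_defect_def induced_bracket_def
    defect_part0_def defect_part1_def defect_part2_def defect_part3_def
  by (simp add: additive_simps X_simps algebra_simps)

lemma defect_parts_permuted_cancel:
  "defect_part0 a b c + defect_part1 b a c + defect_part2 c b a + defect_part3 c a b = 0"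
  unfolding defect_part0_def defect_part1_def defect_part2_def defect_part3_def
  by (simp add: additive_simps X_simps leibniz_left rL_br rR_br rR_rL algebra_simps)

lemma sum_coboundary2_rb_defect_triples:
  "(\<Sum>(a, b, c)\<in>triples_summing_to m. coboundary2 (X a) (rb_defect (X b) (X c)) v1 v2 v3) = 0"
proof -
  let ?S = "\<lambda>F. \<Sum>(a, b, c)\<in>triples_summing_to m. F a b c"
  have "?S (\<lambda>a b c. coboundary2 (X a) (rb_defect (X b) (X c)) v1 v2 v3)
      = ?S defect_part0 + ?S defect_part1 + ?S defect_part2 + ?S defect_part3"
    unfolding sum.distrib[symmetric] by (rule sum.cong) (auto intro: coboundary2_rb_defect_split)
  also have "\<dots> = ?S defect_part0 + ?S (\<lambda>a b c. defect_part1 b a c)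
      + ?S (\<lambda>a b c. defect_part2 c b a) + ?S (\<lambda>a b c. defect_part3 c a b)"
    by (simp only: sum_triples_summing_to_swap12[of defect_part1]
        sum_triples_summing_to_swap13[of defect_part2] sum_triples_summing_to_rotate[of defect_part3])
  also have "\<dots> = ?S (\<lambda>a b c. defect_part0 a b c + defect_part1 b a c
      + defect_part2 c b a + defect_part3 c a b)"
    by (simp add: sum.distrib case_prod_beta)
  also have "\<dots> = 0"
    by (simp add: defect_parts_permuted_cancel case_prod_beta)
  finally show ?thesis .
qed

lemma coboundary2_next_defect_sum:
  assumes "\<And>m u v. m \<le> n \<Longrightarrow> (\<Sum>b\<le>m. rb_defect (X b) (X (m - b)) u v) = 0"
  shows "coboundary2 (X 0) (\<lambda>u v. \<Sum>b\<le>Suc n. rb_defect (X b) (X (Suc n - b)) u v) v1 v2 v3 = 0"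
proof -
  have higher_vanish: "(\<Sum>b\<le>n - i. coboundary2 (X (Suc i)) (rb_defect (X b) (X (n - i - b))) v1 v2 v3) = 0"
    for i
  proof -
    have "(\<Sum>b\<le>n - i. coboundary2 (X (Suc i)) (rb_defect (X b) (X (n - i - b))) v1 v2 v3)
        = coboundary2 (X (Suc i)) (\<lambda>u v. \<Sum>b\<le>n - i. rb_defect (X b) (X (n - i - b)) u v) v1 v2 v3"
      by (rule coboundary2_sum[OF X_add, where A="{..n - i}" and f="\<lambda>b. rb_defect (X b) (X (n - i - b))",
            symmetric]) simp
    also have "\<dots> = coboundary2 (X (Suc i)) (\<lambda>u v. 0) v1 v2 v3"
      using assms[of "n - i"] by simp
    also have "\<dots> = 0" by (rule coboundary2_zero[OF X_add])
    finally show ?thesis .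
  qed
  have "coboundary2 (X 0) (\<lambda>u v. \<Sum>b\<le>Suc n. rb_defect (X b) (X (Suc n - b)) u v) v1 v2 v3
      = (\<Sum>b\<le>Suc n. coboundary2 (X 0) (rb_defect (X b) (X (Suc n - b))) v1 v2 v3)"
    by (rule coboundary2_sum[OF X_add, where A="{..Suc n}" and f="\<lambda>b. rb_defect (X b) (X (Suc n - b))"]) simp
  also have "\<dots> = (\<Sum>(a, b, c)\<in>triples_summing_to (Suc n).
                     coboundary2 (X a) (rb_defect (X b) (X c)) v1 v2 v3)"
    by (simp only: sum_triples_summing_to_Suc higher_vanish) simp
  also have "\<dots> = 0" by (rule sum_coboundary2_rb_defect_triples)
  finally show ?thesis .
qed

end

lemma obstruction_eq_rb_defect_sum:
  assumes "\<And>k. k \<le> n \<Longrightarrow> X k = TT k" and "X (Suc n) = (\<lambda>_. 0)"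
    and "\<And>x y. X 0 (x + y) = X 0 x + X 0 y"
  shows "obstruction br rL rR n TT u v = (\<Sum>b\<le>Suc n. rb_defect (X b) (X (Suc n - b)) u v)"
proof -
  have "(\<Sum>b\<le>Suc n. rb_defect (X b) (X (Suc n - b)) u v) = rb_defect (X 0) (X (Suc n)) u v
     + (\<Sum>b=1..n. rb_defect (X b) (X (Suc n - b)) u v) + rb_defect (X (Suc n)) (X 0) u v"
    by (simp add: sum.atMost_Suc atMost_atLeast0 sum.atLeast_Suc_atMost)
  also have "rb_defect (X 0) (X (Suc n)) u v = 0"
    using additiveD(3)[OF assms(3)] assms(2)
    by (simp add: rb_defect_def induced_bracket_def additive_simps)
  also have "rb_defect (X (Suc n)) (X 0) u v = 0"
    using assms(2) by (simp add: rb_defect_def induced_bracket_def additive_simps)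
  also have "(\<Sum>b=1..n. rb_defect (X b) (X (Suc n - b)) u v) = obstruction br rL rR n TT u v"
    unfolding obstruction_def
  proof (rule sum.cong)
    fix b :: nat
    assume "b \<in> {1..n}"
    then have "X b = TT b" "X (Suc n - b) = TT (n + 1 - b)"
      using assms(1)[of b] assms(1)[of "Suc n - b"] by auto
    then show "rb_defect (X b) (X (Suc n - b)) u v
        = br (TT b u) (TT (n + 1 - b) v) - TT b (rL (TT (n + 1 - b) u) v + rR (TT (n + 1 - b) v) u)"
      by (simp add: rb_defect_def induced_bracket_def)
  qed simp
  finally show ?thesis by simp
qed

lemma rb_defect_sum_eq_zero_if_order_n_deformation:
  assumes "order_n_deformation sG br sV rL rR T n TT" and "m \<le> n"
    and "\<And>k. k \<le> n \<Longrightarrow> X k = TT k"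
  shows "(\<Sum>b\<le>m. rb_defect (X b) (X (m - b)) u v) = 0"
proof -
  have "(\<Sum>b\<le>m. rb_defect (X b) (X (m - b)) u v) = (\<Sum>k=0..m. br (TT k u) (TT (m - k) v)
      - TT k (rL (TT (m - k) u) v + rR (TT (m - k) v) u))"
    unfolding atMost_atLeast0 using assms(2,3)
    by (intro sum.cong) (auto simp: rb_defect_def induced_bracket_def)
  also have "\<dots> = 0"
    using assms(1,2) unfolding order_n_deformation_def by blast
  finally show ?thesis .
qed

lemma coboundary_2_eq_coboundary2:
  assumes "vector_space sG"
  shows "coboundary sG br rL rR T 2 (\<lambda>vs. f (vs ! 0) (vs ! 1)) [v1, v2, v3]
    = coboundary2 T f v1 v2 v3"
proof -
  have scale: "sG 1 x = x" "sG (-1) x = - x" for x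
    using assms by (simp_all add: module_iff_vector_space[symmetric] module.scale_one module.scale_minus_left)
  have intervals: "{1..2::nat} = {1, 2}" "{1..3::nat} = {1, 2, 3}" "{1..<2::nat} = {1}"
    "{1..<3::nat} = {1, 2}" "{1..<1::nat} = {}"
    by auto
  show ?thesis
    unfolding coboundary_def coboundary2_def induced_bracket_def
    by (simp add: Let_def intervals scale numeral_2_eq_2 numeral_3_eq_3 algebra_simps)
qed

end

lemma additive_leibniz_rep_if_leibniz_rep:
  assumes "leibniz_algebra sG br" and "leibniz_rep sG br sV rL rR"
  shows "additive_leibniz_rep br rL rR"
  using assms unfolding leibniz_algebra_def leibniz_rep_def
  by unfold_locales (blast | metis linear_add)+

theorem proposition3p24:
  fixes sG :: "'k::field \<Rightarrow> 'g::ab_group_add \<Rightarrow> 'g"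
    and sV :: "'k \<Rightarrow> 'v::ab_group_add \<Rightarrow> 'v"
    and br :: "'g \<Rightarrow> 'g \<Rightarrow> 'g"
    and rhoL rhoR :: "'g \<Rightarrow> 'v \<Rightarrow> 'v"
    and T :: "'v \<Rightarrow> 'g"
    and n :: nat
    and TT :: "nat \<Rightarrow> 'v \<Rightarrow> 'g"
  assumes "leibniz_algebra sG br"
    and "leibniz_rep sG br sV rhoL rhoR"
    and "relative_RB sG br sV rhoL rhoR T"
    and "order_n_deformation sG br sV rhoL rhoR T n TT"
  shows "\<forall>v1 v2 v3. coboundary sG br rhoL rhoR T 2
           (\<lambda>vs. obstruction br rhoL rhoR n TT (vs ! 0) (vs ! 1)) [v1, v2, v3] = 0"
proof (intro allI)
  fix v1 v2 v3
  interpret additive_leibniz_rep br rhoL rhoR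
    using assms(1,2) by (rule additive_leibniz_rep_if_leibniz_rep)
  define X where "X k = (if k \<le> n then TT k else (\<lambda>_. 0))" for k
  have X_add: "X k (x + y) = X k x + X k y" for k x y
    using assms(4) unfolding X_def order_n_deformation_def by (auto intro: linear_add)
  have X0: "X 0 = T"
    using assms(4) by (simp add: X_def order_n_deformation_def)
  have deformation: "(\<Sum>b\<le>m. rb_defect (X b) (X (m - b)) u v) = 0" if "m \<le> n" for m u v
    using assms(4) that by (rule rb_defect_sum_eq_zero_if_order_n_deformation) (simp add: X_def)
  have obstruction: "obstruction br rhoL rhoR n TT
      = (\<lambda>u v. \<Sum>b\<le>Suc n. rb_defect (X b) (X (Suc n - b)) u v)"
    by (intro ext obstruction_eq_rb_defect_sum X_add) (simp_all add: X_def)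
  have "vector_space sG"
    using assms(1) unfolding leibniz_algebra_def by blast
  moreover have "coboundary2 T (obstruction br rhoL rhoR n TT) v1 v2 v3 = 0"
    unfolding obstruction X0[symmetric] by (rule coboundary2_next_defect_sum[OF X_add deformation])
  ultimately show "coboundary sG br rhoL rhoR T 2
      (\<lambda>vs. obstruction br rhoL rhoR n TT (vs ! 0) (vs ! 1)) [v1, v2, v3] = 0"
    by (simp only: coboundary_2_eq_coboundary2)
qed

end
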